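(* Let $\mu>0$, $U>0$ and $\delta>2\mu U^{-1}$. Let $\gamma$ be a density matrix on $\mathbb{C}^\Lambda$ with density $\rho(x)=\gamma_{x,x}$, $\Omega=\{x:\rho(x)<\delta\}$, $\Omega^c=\{x:\rho(x)\ge\delta\}$, and define $\tilde\rho(x)=\rho(x)$ for $x\in\Omega^c$ and $\tilde\rho(x)=\min\{\frac{\mu}{2U},\rho(x)\}$ for $x\in\Omega$ (viewed also as a diagonal multiplication operator). Then $$\mathrm{Tr}\{[K_\mu+U\tilde\rho]_-\}\ \ge\ \mathrm{Tr}\{[P_\Omega(K_\mu+U\tilde\rho)P_\Omega]_-\}-\frac{8d^2}{U\delta}\,|\partial\Omega|.$$
   Context: $\Lambda=\mathbb{Z}_L^d$; $T_{x,y}=1$ if $|x-y|_1=1$, else $0$; $\Delta_{x,y}=T_{x,y}-2d\delta_{x,y}$; $K_\mu=-\Delta-\mu$; $[X]_-=\min\{X,0\}$. $P_A$ denotes the orthogonal projection of $\mathbb{C}^\Lambda$ onto functions supported in $A\subseteq\Lambda$. $\partial\Omega=\{x\in\Omega:\mathrm{dist}_1(x,\Omega^c)=1\}$ with $\mathrm{dist}_1$ the graph distance; $|\partial\Omega|$ its cardinality. *)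

theory Defs
  imports "Jordan_Normal_Form.Schur_Decomposition" "HOL-Computational_Algebra.Polynomial"
begin

text \<open>The torus Lambda = (Z_L)^d is encoded by the index set {0..<L^d};
  index n corresponds to the point with coordinates (n div L^i) mod L, i < d.\<close>

definition lat_size :: "nat \<Rightarrow> nat \<Rightarrow> nat" where
  "lat_size L d = L ^ d"

definition coord :: "nat \<Rightarrow> nat \<Rightarrow> nat \<Rightarrow> nat" where
  "coord L i n = (n div L ^ i) mod L"

definition tdist :: "nat \<Rightarrow> nat \<Rightarrow> nat \<Rightarrow> nat \<Rightarrow> nat" where
  "tdist L d x y = (\<Sum>i<d. let a = coord L i x; b = coord L i y;
                              t = (if a \<le> b then b - a else a - b)
                          in min t (L - t))"

definition hop :: "nat \<Rightarrow> nat \<Rightarrow> complex mat" where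
  "hop L d = mat (lat_size L d) (lat_size L d)
      (\<lambda>(x, y). if tdist L d x y = 1 then 1 else 0)"

definition lap :: "nat \<Rightarrow> nat \<Rightarrow> complex mat" where
  "lap L d = hop L d - of_nat (2 * d) \<cdot>\<^sub>m 1\<^sub>m (lat_size L d)"

definition Kmu :: "nat \<Rightarrow> nat \<Rightarrow> real \<Rightarrow> complex mat" where
  "Kmu L d \<mu> = - lap L d - complex_of_real \<mu> \<cdot>\<^sub>m 1\<^sub>m (lat_size L d)"

definition proj :: "nat \<Rightarrow> nat set \<Rightarrow> complex mat" where
  "proj N A = mat N N (\<lambda>(x, y). if x = y \<and> x \<in> A then 1 else 0)"

definition mult_op :: "nat \<Rightarrow> (nat \<Rightarrow> real) \<Rightarrow> complex mat" where
  "mult_op N f = mat N N (\<lambda>(x, y). if x = y then complex_of_real (f x) else 0)"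

definition hermitian :: "complex mat \<Rightarrow> bool" where
  "hermitian A \<longleftrightarrow> mat_adjoint A = A"

definition density_matrix :: "nat \<Rightarrow> complex mat \<Rightarrow> bool" where
  "density_matrix N \<gamma> \<longleftrightarrow> \<gamma> \<in> carrier_mat N N \<and> hermitian \<gamma> \<and>
     (\<forall>v \<in> carrier_vec N. 0 \<le> Re (\<Sum>i<N. cnj (v $ i) * (\<gamma> *\<^sub>v v) $ i))"

text \<open>Tr [A]_- : sum of the negative parts of the eigenvalues of A
  (roots of the characteristic polynomial counted with multiplicity;
  they are real for hermitian A).\<close>
definition neg_trace :: "complex mat \<Rightarrow> real" where
  "neg_trace A = sum_mset (image_mset (\<lambda>z. min (Re z) 0) (proots (char_poly A)))"

definition bdry :: "nat \<Rightarrow> nat \<Rightarrow> nat set \<Rightarrow> nat set" where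
  "bdry L d \<Omega> = {x \<in> \<Omega>. {..<lat_size L d} - \<Omega> \<noteq> {} \<and>
       Min ((\<lambda>y. tdist L d x y) ` ({..<lat_size L d} - \<Omega>)) = 1}"

definition dens :: "complex mat \<Rightarrow> nat \<Rightarrow> real" where
  "dens \<gamma> x = Re (\<gamma> $$ (x, x))"

definition low_set :: "nat \<Rightarrow> complex mat \<Rightarrow> real \<Rightarrow> nat set" where
  "low_set N \<gamma> \<delta> = {x \<in> {..<N}. dens \<gamma> x < \<delta>}"

definition rho_tilde :: "nat \<Rightarrow> complex mat \<Rightarrow> real \<Rightarrow> real \<Rightarrow> real \<Rightarrow> nat \<Rightarrow> real" where
  "rho_tilde N \<gamma> \<delta> \<mu> U x =
     (if x \<in> low_set N \<gamma> \<delta> then min (\<mu> / (2 * U)) (dens \<gamma> x) else dens \<gamma> x)"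

end

theory Submission
  imports Defs
begin

(* Write H = K_mu + U rho~ as a diagonal potential a minus the hopping matrix T; outside Omega
   the potential exceeds 2d + U delta/2. The quadratic form of H differs from that of
   P_Omega H P_Omega by the potential outside Omega and by the hopping terms leaving Omega.
   Each hopping term between x in Omega and y outside is split by AM-GM with weight
   eps = 4d/(U delta) at x and 1/eps at y; the part at y is absorbed by the potential, so
   H >= P_Omega H P_Omega - W with W = 8d^2/(U delta) on the boundary of Omega and 0 elsewhere.
   Evaluating this on the eigenvectors of H with negative eigenvalues, and using that Tr[M]_-
   is a lower bound for every partial trace of M over an orthonormal family, gives the claim. *)

section \<open>Geometry of the discrete torus\<close>

lemma coord_Suc: "coord L (Suc i) y = coord L i (y div L)"
  unfolding coord_def by (simp add: div_mult2_eq mult.commute)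

lemma coord_less: "0 < L \<Longrightarrow> coord L i y < L"
  unfolding coord_def by simp

lemma eq_if_coord_eq:
  assumes "y < L ^ d" "y' < L ^ d" "\<And>i. i < d \<Longrightarrow> coord L i y = coord L i y'"
  shows "y = y'"
  using assms
proof (induction d arbitrary: y y')
  case 0
  then show ?case by simp
next
  case (Suc d)
  have "0 < L" using Suc.prems(1) by (cases L) auto
  then have "y div L < L ^ d" "y' div L < L ^ d"
    using Suc.prems(1,2) by (simp_all add: div_less_iff_less_mult mult.commute)
  moreover have "coord L i (y div L) = coord L i (y' div L)" if "i < d" for i
    using Suc.prems(3)[of "Suc i"] that by (simp add: coord_Suc)
  ultimately have "y div L = y' div L" by (rule Suc.IH)
  moreover have "y mod L = y' mod L" using Suc.prems(3)[of 0] by (simp add: coord_def)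
  ultimately show ?case by (metis div_mult_mod_eq)
qed

definition cyc_dist :: "nat \<Rightarrow> nat \<Rightarrow> nat \<Rightarrow> nat" where
  "cyc_dist L a b = (let t = (if a \<le> b then b - a else a - b) in min t (L - t))"

lemma tdist_eq_sum_cyc_dist: "tdist L d x y = (\<Sum>i<d. cyc_dist L (coord L i x) (coord L i y))"
  unfolding tdist_def cyc_dist_def by (simp add: Let_def)

lemma cyc_dist_commute: "cyc_dist L a b = cyc_dist L b a"
  unfolding cyc_dist_def Let_def by auto

lemma tdist_commute: "tdist L d x y = tdist L d y x"
  unfolding tdist_eq_sum_cyc_dist by (simp add: cyc_dist_commute)

lemma cyc_dist_eq_0_iff: "a < L \<Longrightarrow> b < L \<Longrightarrow> cyc_dist L a b = 0 \<longleftrightarrow> a = b"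
  unfolding cyc_dist_def Let_def by (auto split: if_splits)

lemma cyc_dist_eq_1:
  assumes "a < L" "b < L" "cyc_dist L a b = 1"
  shows "b = (a + 1) mod L \<or> b = (a + L - 1) mod L"
proof (cases "a \<le> b")
  case True
  then have "min (b - a) (L - (b - a)) = 1"
    using assms(3) unfolding cyc_dist_def Let_def by simp
  then have "b - a = 1 \<or> L - (b - a) = 1" by linarith
  then show ?thesis
  proof
    assume "b - a = 1"
    then have "b = a + 1" by simp
    then show ?thesis using assms(2) by simp
  next
    assume "L - (b - a) = 1"
    then have "a = 0" "b = L - 1" using assms(1,2) True by linarith+
    then show ?thesis using assms(2) by simp
  qed
next
  case False
  then have "min (a - b) (L - (a - b)) = 1"
    using assms(3) unfolding cyc_dist_def Let_def by simp
  then have "a - b = 1 \<or> L - (a - b) = 1" by linarith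
  then show ?thesis
  proof
    assume "a - b = 1"
    then have "a + L - 1 = b + L" using False by simp
    then show ?thesis using assms(2) by simp
  next
    assume "L - (a - b) = 1"
    then have "b = 0" "a + 1 = L" using assms(1,2) False by linarith+
    then show ?thesis by simp
  qed
qed

lemma tdist_eq_1_single_coord:
  assumes "0 < L" "tdist L d x y = 1"
  obtains i where "i < d" "cyc_dist L (coord L i x) (coord L i y) = 1"
    "\<And>j. j < d \<Longrightarrow> j \<noteq> i \<Longrightarrow> coord L j y = coord L j x"
proof -
  define f where "f i = cyc_dist L (coord L i x) (coord L i y)" for i
  have sum_f: "sum f {..<d} = 1" using assms(2) unfolding f_def tdist_eq_sum_cyc_dist .
  then obtain i where i: "i < d" "f i \<noteq> 0"
    by (metis lessThan_iff sum.neutral zero_neq_one)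
  have "f i \<le> 1" using member_le_sum[of i "{..<d}" f] i sum_f by simp
  moreover have "coord L j y = coord L j x" if j: "j < d" "j \<noteq> i" for j
  proof -
    have "sum f {i, j} \<le> sum f {..<d}" by (rule sum_mono2) (use i j in auto)
    then have "f j = 0" using i j sum_f by simp
    then show ?thesis using cyc_dist_eq_0_iff[OF coord_less coord_less] assms(1) unfolding f_def by metis
  qed
  ultimately show ?thesis using that i unfolding f_def by fastforce
qed

lemma card_neighbours_le: "card {y \<in> {..<lat_size L d}. tdist L d x y = 1} \<le> 2 * d"
proof (cases "L = 0")
  case True
  then have "{y \<in> {..<lat_size L d}. tdist L d x y = 1} = {}"
    unfolding lat_size_def tdist_def by (cases d) auto
  then show ?thesis by (metis card.empty le0)
next
  case False
  then have L: "0 < L" by simp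
  define N where "N = lat_size L d"
  define A where "A i b = {y \<in> {..<N}. \<forall>j<d. coord L j y = (if j = i then b else coord L j x)}" for i b
  define B where "B i = {(coord L i x + 1) mod L, (coord L i x + L - 1) mod L}" for i
  have "{y \<in> {..<N}. tdist L d x y = 1} \<subseteq> (\<Union>i<d. \<Union>b\<in>B i. A i b)"
  proof
    fix y assume y: "y \<in> {y \<in> {..<N}. tdist L d x y = 1}"
    then obtain i where i: "i < d" "cyc_dist L (coord L i x) (coord L i y) = 1"
      "\<And>j. j < d \<Longrightarrow> j \<noteq> i \<Longrightarrow> coord L j y = coord L j x"
      using tdist_eq_1_single_coord[OF L] by blast
    have "coord L i y \<in> B i" using cyc_dist_eq_1[OF coord_less coord_less i(2)] L unfolding B_def by auto
    then show "y \<in> (\<Union>i<d. \<Union>b\<in>B i. A i b)" using i y unfolding A_def by auto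
  qed
  then have "card {y \<in> {..<N}. tdist L d x y = 1} \<le> card (\<Union>i<d. \<Union>b\<in>B i. A i b)"
    by (rule card_mono[rotated]) (auto simp: A_def B_def)
  also have "\<dots> \<le> (\<Sum>i<d. \<Sum>b\<in>B i. card (A i b))"
    by (intro order.trans[OF card_UN_le] sum_mono card_UN_le) (auto simp: B_def)
  also have "\<dots> \<le> (\<Sum>i<d. \<Sum>b\<in>B i. 1)"
  proof (intro sum_mono)
    fix i b
    have "y = y'" if "y \<in> A i b" "y' \<in> A i b" for y y'
      using that unfolding A_def N_def lat_size_def by (intro eq_if_coord_eq[of y L d y']) auto
    moreover have "finite (A i b)" unfolding A_def by simp
    ultimately show "card (A i b) \<le> 1" by (simp add: card_le_Suc0_iff_eq)
  qed
  also have "\<dots> \<le> (\<Sum>i<d. 2)" by (intro sum_mono) (simp add: B_def card_insert_le_m1)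
  finally show ?thesis unfolding N_def by simp
qed

lemma tdist_ge_1:
  assumes "x < lat_size L d" "y < lat_size L d" "x \<noteq> y"
  shows "1 \<le> tdist L d x y"
proof -
  have L: "0 < L" using assms unfolding lat_size_def by (cases L; cases d) auto
  obtain i where i: "i < d" "coord L i x \<noteq> coord L i y"
    using eq_if_coord_eq[of x L d y] assms unfolding lat_size_def by auto
  have "1 \<le> cyc_dist L (coord L i x) (coord L i y)"
    using cyc_dist_eq_0_iff[OF coord_less coord_less] L i(2) by (metis less_one not_less)
  also have "\<dots> \<le> tdist L d x y" unfolding tdist_eq_sum_cyc_dist
    by (rule member_le_sum) (use i in auto)
  finally show ?thesis .
qed

lemma in_bdryI:
  assumes "x \<in> \<Omega>" "x < lat_size L d" "y < lat_size L d" "y \<notin> \<Omega>" "tdist L d x y = 1"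
  shows "x \<in> bdry L d \<Omega>"
proof -
  let ?C = "{..<lat_size L d} - \<Omega>"
  have "Min (tdist L d x ` ?C) = 1"
  proof (rule Min_eqI)
    show "1 \<in> tdist L d x ` ?C" using assms by force
  next
    fix t assume "t \<in> tdist L d x ` ?C"
    then show "1 \<le> t" using assms tdist_ge_1[of x L d] by auto
  qed simp
  then show ?thesis unfolding bdry_def using assms by auto
qed

lemma dim_mat_adjoint [simp]:
  "dim_row (mat_adjoint A) = dim_col A" "dim_col (mat_adjoint A) = dim_row A"
  unfolding mat_adjoint_def by (simp_all add: mat_of_rows_def)

lemma mat_adjoint_carrier [simp]: "A \<in> carrier_mat m n \<Longrightarrow> mat_adjoint A \<in> carrier_mat n m"
  by (intro carrier_matI) auto

lemma index_mat_adjoint [simp]: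
  fixes A :: "complex mat"
  shows "i < dim_col A \<Longrightarrow> j < dim_row A \<Longrightarrow> mat_adjoint A $$ (i, j) = cnj (A $$ (j, i))"
  unfolding mat_adjoint_def by (simp add: mat_of_rows_def)

lemma mat_adjoint_mat_adjoint [simp]: "mat_adjoint (mat_adjoint A) = (A :: complex mat)"
  by (rule eq_matI) auto

lemma mat_adjoint_one [simp]: "mat_adjoint (1\<^sub>m n) = (1\<^sub>m n :: complex mat)"
  by (rule eq_matI) auto

lemma index_mult_mat_sum:
  "A \<in> carrier_mat m n \<Longrightarrow> B \<in> carrier_mat n p \<Longrightarrow> i < m \<Longrightarrow> j < p \<Longrightarrow>
    (A * B) $$ (i, j) = (\<Sum>k<n. A $$ (i, k) * B $$ (k, j))"
  by (auto simp: scalar_prod_def atLeast0LessThan intro!: sum.cong)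

lemma mat_adjoint_mult:
  fixes A B :: "complex mat"
  assumes "A \<in> carrier_mat m n" "B \<in> carrier_mat n p"
  shows "mat_adjoint (A * B) = mat_adjoint B * mat_adjoint A"
proof (rule eq_matI)
  fix i j assume "i < dim_row (mat_adjoint B * mat_adjoint A)" "j < dim_col (mat_adjoint B * mat_adjoint A)"
  then have i: "i < p" and j: "j < m" using assms by auto
  have "mat_adjoint (A * B) $$ (i, j) = cnj ((A * B) $$ (j, i))"
    using i j assms by simp
  also have "\<dots> = (\<Sum>k<n. cnj (A $$ (j, k)) * cnj (B $$ (k, i)))"
    using i j assms by (subst index_mult_mat_sum[of A m n B p]) (auto simp: cnj_sum)
  also have "\<dots> = (mat_adjoint B * mat_adjoint A) $$ (i, j)"
    using i j assms by (subst index_mult_mat_sum[of _ p n _ m]) (auto simp: mult.commute)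
  finally show "mat_adjoint (A * B) $$ (i, j) = (mat_adjoint B * mat_adjoint A) $$ (i, j)" .
qed (use assms in auto)

lemma index_adjoint_mult_mult:
  fixes X Y :: "complex mat"
  assumes "X \<in> carrier_mat n m" "Y \<in> carrier_mat n n" "i < m" "j < m"
  shows "(mat_adjoint X * Y * X) $$ (i, j) = (\<Sum>k<n. \<Sum>l<n. cnj (X $$ (k, i)) * Y $$ (k, l) * X $$ (l, j))"
proof -
  have "(mat_adjoint X * Y * X) $$ (i, j) = (\<Sum>l<n. (mat_adjoint X * Y) $$ (i, l) * X $$ (l, j))"
    using assms by (intro index_mult_mat_sum[of _ m n]) auto
  also have "\<dots> = (\<Sum>l<n. (\<Sum>k<n. cnj (X $$ (k, i)) * Y $$ (k, l)) * X $$ (l, j))"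
    using assms by (intro sum.cong refl) (subst index_mult_mat_sum[of _ m n _ n], auto)
  also have "\<dots> = (\<Sum>k<n. \<Sum>l<n. cnj (X $$ (k, i)) * Y $$ (k, l) * X $$ (l, j))"
    by (simp add: sum_distrib_right) (rule sum.swap)
  finally show ?thesis .
qed

lemma mat_mult_regroup:
  assumes "P \<in> carrier_mat n n" "Q \<in> carrier_mat n n" "A \<in> carrier_mat n n"
    "R \<in> carrier_mat n n" "S \<in> carrier_mat n n"
  shows "(P * Q) * A * (R * S) = P * (Q * A * R) * S"
proof -
  have "(P * Q) * A * (R * S) = P * (Q * A) * (R * S)"
    using assms by (simp add: assoc_mult_mat[of P n n Q n])
  also have "\<dots> = P * ((Q * A) * (R * S))"
    using assms by (intro assoc_mult_mat[of _ n n _ n _ n]) auto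
  also have "(Q * A) * (R * S) = (Q * A * R) * S"
    using assms by (intro assoc_mult_mat[of _ n n _ n _ n, symmetric]) auto
  also have "P * (Q * A * R * S) = P * (Q * A * R) * S"
    using assms by (intro assoc_mult_mat[of _ n n _ n _ n, symmetric]) auto
  finally show ?thesis .
qed

definition unitary :: "nat \<Rightarrow> complex mat \<Rightarrow> bool" where
  "unitary n U \<longleftrightarrow> U \<in> carrier_mat n n \<and> mat_adjoint U * U = 1\<^sub>m n"

lemma unitary_carrier: "unitary n U \<Longrightarrow> U \<in> carrier_mat n n"
  by (simp add: unitary_def)

lemma unitary_mult_adjoint: "unitary n U \<Longrightarrow> U * mat_adjoint U = 1\<^sub>m n"
  unfolding unitary_def using mat_mult_left_right_inverse[of "mat_adjoint U" n U] by auto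

lemma unitary_adjoint: "unitary n U \<Longrightarrow> unitary n (mat_adjoint U)"
  using unitary_mult_adjoint[of n U] by (simp add: unitary_def)

lemma unitary_mult:
  assumes "unitary n U" "unitary n V"
  shows "unitary n (U * V)"
proof -
  have U: "U \<in> carrier_mat n n" and V: "V \<in> carrier_mat n n" using assms by (simp_all add: unitary_def)
  have "mat_adjoint U * (U * V) = V"
    using assoc_mult_mat[of "mat_adjoint U" n n U n V n] U V assms(1) by (simp add: unitary_def)
  then have "mat_adjoint (U * V) * (U * V) = mat_adjoint V * V"
    using U V by (simp add: mat_adjoint_mult assoc_mult_mat[of _ n n _ n _ n])
  then show ?thesis using assms U V by (simp add: unitary_def)
qed

lemma unitary_row_norm:
  assumes "unitary n U" "k < n"
  shows "(\<Sum>i<n. (cmod (U $$ (k, i)))\<^sup>2) = 1"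
proof -
  have U: "U \<in> carrier_mat n n" using assms(1) by (simp add: unitary_def)
  have "of_real (\<Sum>i<n. (cmod (U $$ (k, i)))\<^sup>2) = (\<Sum>i<n. U $$ (k, i) * cnj (U $$ (k, i)))"
    unfolding of_real_sum by (intro sum.cong refl) (metis complex_norm_square)
  also have "\<dots> = (U * mat_adjoint U) $$ (k, k)"
    using U assms(2) by (subst index_mult_mat_sum[of _ n n _ n]) auto
  also have "\<dots> = 1" using unitary_mult_adjoint[OF assms(1)] assms(2) by simp
  finally have "complex_of_real (\<Sum>i<n. (cmod (U $$ (k, i)))\<^sup>2) = 1" .
  then show ?thesis by (simp only: of_real_eq_1_iff)
qed

lemma sum_row_norm_unitary_le_1:
  assumes "unitary n U" "k < n" "S \<subseteq> {..<n}"
  shows "(\<Sum>i\<in>S. (cmod (U $$ (k, i)))\<^sup>2) \<le> 1"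
proof -
  have "(\<Sum>i\<in>S. (cmod (U $$ (k, i)))\<^sup>2) \<le> (\<Sum>i<n. (cmod (U $$ (k, i)))\<^sup>2)"
    by (rule sum_mono2) (use assms(3) in auto)
  then show ?thesis using unitary_row_norm[OF assms(1,2)] by linarith
qed

lemma hermitian_iff_index:
  fixes A :: "complex mat"
  assumes "A \<in> carrier_mat n n"
  shows "hermitian A \<longleftrightarrow> (\<forall>i<n. \<forall>j<n. A $$ (j, i) = cnj (A $$ (i, j)))"
proof
  assume "hermitian A"
  show "\<forall>i<n. \<forall>j<n. A $$ (j, i) = cnj (A $$ (i, j))"
  proof (intro allI impI)
    fix i j assume "i < n" "j < n"
    have "A $$ (j, i) = mat_adjoint A $$ (j, i)" using \<open>hermitian A\<close> by (simp add: hermitian_def)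
    also have "\<dots> = cnj (A $$ (i, j))" using \<open>i < n\<close> \<open>j < n\<close> assms by simp
    finally show "A $$ (j, i) = cnj (A $$ (i, j))" .
  qed
next
  assume entries: "\<forall>i<n. \<forall>j<n. A $$ (j, i) = cnj (A $$ (i, j))"
  show "hermitian A" unfolding hermitian_def
  proof (rule eq_matI)
    fix i j assume "i < dim_row A" "j < dim_col A"
    then show "mat_adjoint A $$ (i, j) = A $$ (i, j)" using assms entries[rule_format, of j i] by simp
  qed (use assms in simp_all)
qed

lemma hermitian_index:
  fixes A :: "complex mat"
  assumes "A \<in> carrier_mat n n" "hermitian A" "i < n" "j < n"
  shows "A $$ (j, i) = cnj (A $$ (i, j))"
  using assms hermitian_iff_index[OF assms(1)] by blast

lemma hermitian_diag_real:
  assumes "A \<in> carrier_mat n n" "hermitian A" "i < n"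
  shows "Im (A $$ (i, i)) = 0"
proof -
  have "A $$ (i, i) = cnj (A $$ (i, i))" using hermitian_index[OF assms(1,2,3,3)] .
  then have "Im (A $$ (i, i)) = Im (cnj (A $$ (i, i)))" by (rule arg_cong)
  then show ?thesis by simp
qed

lemma adjoint_mult_mult_carrier:
  "X \<in> carrier_mat n m \<Longrightarrow> A \<in> carrier_mat n n \<Longrightarrow> mat_adjoint X * A * X \<in> carrier_mat m m"
  by (intro mult_carrier_mat[of _ m n]) auto

lemma hermitian_adjoint_mult_mult:
  assumes "X \<in> carrier_mat n m" "A \<in> carrier_mat n n" "hermitian A"
  shows "hermitian (mat_adjoint X * A * X)"
proof -
  have X': "mat_adjoint X \<in> carrier_mat m n" using assms(1) by simp
  have XA: "mat_adjoint X * A \<in> carrier_mat m n" using X' assms(2) by simp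
  have "mat_adjoint (mat_adjoint X * A * X) = mat_adjoint X * (mat_adjoint A * X)"
    using mat_adjoint_mult[OF XA assms(1)] mat_adjoint_mult[OF X' assms(2)] by simp
  also have "\<dots> = mat_adjoint X * A * X"
    using assms(3) by (simp add: hermitian_def assoc_mult_mat[OF X' assms(2,1)])
  finally show ?thesis unfolding hermitian_def .
qed

section \<open>Spectral theorem for hermitian matrices\<close>

lemma unit_eigenvector_exists:
  fixes A :: "complex mat"
  assumes A: "A \<in> carrier_mat n n" and "0 < n"
  obtains v e where "v \<in> carrier_vec n" "(\<Sum>k<n. (cmod (v $ k))\<^sup>2) = 1" "A *\<^sub>v v = e \<cdot>\<^sub>v v"
proof -
  obtain es where cp: "char_poly A = (\<Prod>a\<leftarrow>es. [:- a, 1:])" and "length es = n"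
    using char_poly_factorized[OF A] by blast
  with \<open>0 < n\<close> obtain e es' where "es = e # es'" by (cases es) auto
  then have "eigenvalue A e" unfolding eigenvalue_root_char_poly[OF A] cp by simp
  then obtain v0 where "eigenvector A v0 e" unfolding eigenvalue_def by blast
  then have v0: "v0 \<in> carrier_vec n" "v0 \<noteq> 0\<^sub>v n" "A *\<^sub>v v0 = e \<cdot>\<^sub>v v0"
    unfolding eigenvector_def using A by auto
  have "\<exists>k<n. v0 $ k \<noteq> 0"
  proof (rule ccontr)
    assume "\<not> (\<exists>k<n. v0 $ k \<noteq> 0)"
    then have "v0 = 0\<^sub>v n" using v0(1) by (intro eq_vecI) auto
    with v0(2) show False by simp
  qed
  then obtain k0 where k0: "k0 < n" "v0 $ k0 \<noteq> 0" by blast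
  define s where "s = (\<Sum>k<n. (cmod (v0 $ k))\<^sup>2)"
  have "0 < (cmod (v0 $ k0))\<^sup>2" using k0(2) by simp
  also have "\<dots> \<le> s" unfolding s_def by (rule member_le_sum) (use k0(1) in auto)
  finally have "0 < s" .
  define c where "c = 1 / sqrt s"
  define v where "v = complex_of_real c \<cdot>\<^sub>v v0"
  show ?thesis
  proof
    show "v \<in> carrier_vec n" unfolding v_def using v0(1) by simp
    have "(\<Sum>k<n. (cmod (v $ k))\<^sup>2) = (\<Sum>k<n. c\<^sup>2 * (cmod (v0 $ k))\<^sup>2)"
      unfolding v_def using v0(1) by (intro sum.cong refl) (auto simp: norm_mult power_mult_distrib)
    also have "\<dots> = c\<^sup>2 * s" unfolding s_def by (simp add: sum_distrib_left)
    also have "\<dots> = 1" unfolding c_def using \<open>0 < s\<close> by (simp add: power_divide)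
    finally show "(\<Sum>k<n. (cmod (v $ k))\<^sup>2) = 1" .
    show "A *\<^sub>v v = e \<cdot>\<^sub>v v"
      unfolding v_def using mult_mat_vec[OF A v0(1)] v0(3) by (simp add: smult_smult_assoc mult.commute)
  qed
qed

lemma cscalar_prod_self:
  assumes "v \<in> carrier_vec n"
  shows "v \<bullet>c v = of_real (\<Sum>k<n. (cmod (v $ k))\<^sup>2)"
proof -
  have "v \<bullet>c v = (\<Sum>k<n. v $ k * cnj (v $ k))"
    using assms by (auto simp: scalar_prod_def atLeast0LessThan)
  also have "\<dots> = (\<Sum>k<n. of_real ((cmod (v $ k))\<^sup>2))" by (intro sum.cong refl) (metis complex_norm_square)
  finally show ?thesis by (simp only: of_real_sum)
qed

lemma unitary_normalize_orthogonal_cols: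
  assumes len: "length ws = n" and ws: "set ws \<subseteq> carrier_vec n" and orth: "corthogonal ws"
  defines "nw \<equiv> \<lambda>i. sqrt (\<Sum>k<n. (cmod (ws ! i $ k))\<^sup>2)"
  shows "unitary n (mat n n (\<lambda>(k, i). ws ! i $ k / of_real (nw i)))"
proof -
  define W where "W = mat n n (\<lambda>(k, i). ws ! i $ k / of_real (nw i))"
  have ws_i: "ws ! i \<in> carrier_vec n" if "i < n" for i using ws len that by auto
  have nw_sq: "ws ! i \<bullet>c ws ! i = of_real ((nw i)\<^sup>2)" if "i < n" for i
    unfolding nw_def using cscalar_prod_self[OF ws_i[OF that]] by (simp add: sum_nonneg)
  have nw_pos: "0 < nw i" if i: "i < n" for i
  proof -
    have "ws ! i \<bullet>c ws ! i \<noteq> 0" using orth i len by (auto dest: corthogonalD)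
    then have "nw i \<noteq> 0" using nw_sq[OF i] by auto
    moreover have "0 \<le> nw i" unfolding nw_def by (simp add: sum_nonneg)
    ultimately show ?thesis by simp
  qed
  have Wc: "W \<in> carrier_mat n n" unfolding W_def by simp
  have "mat_adjoint W * W = 1\<^sub>m n"
  proof (rule eq_matI)
    fix i j assume "i < dim_row (1\<^sub>m n)" "j < dim_col (1\<^sub>m n)"
    then have i: "i < n" and j: "j < n" by auto
    have "(mat_adjoint W * W) $$ (i, j) = (\<Sum>k<n. cnj (W $$ (k, i)) * W $$ (k, j))"
      using Wc i j by (subst index_mult_mat_sum[of _ n n _ n]) auto
    also have "\<dots> = (\<Sum>k<n. ws ! j $ k * cnj (ws ! i $ k)) / (of_real (nw i) * of_real (nw j))"
      unfolding W_def using i j by (auto simp: sum_divide_distrib intro!: sum.cong)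
    also have "(\<Sum>k<n. ws ! j $ k * cnj (ws ! i $ k)) = ws ! j \<bullet>c ws ! i"
      using ws_i[OF i] ws_i[OF j] by (auto simp: scalar_prod_def atLeast0LessThan intro!: sum.cong)
    finally have entry: "(mat_adjoint W * W) $$ (i, j) = ws ! j \<bullet>c ws ! i / (of_real (nw i) * of_real (nw j))" .
    show "(mat_adjoint W * W) $$ (i, j) = 1\<^sub>m n $$ (i, j)"
    proof (cases "i = j")
      case True
      then show ?thesis using entry nw_sq[OF i] i nw_pos[OF i] by (simp add: power2_eq_square)
    next
      case False
      then have "ws ! j \<bullet>c ws ! i = 0" using orth i j len by (auto dest: corthogonalD)
      then show ?thesis using entry False i j by simp
    qed
  qed (use Wc in auto)
  then show ?thesis using Wc unfolding W_def unitary_def by simp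
qed

lemma unitary_with_first_column:
  assumes v: "v \<in> carrier_vec n" and norm_v: "(\<Sum>k<n. (cmod (v $ k))\<^sup>2) = 1"
  obtains W where "unitary n W" "col W 0 = v"
proof -
  have n: "0 < n" using norm_v by (cases n) auto
  have "v \<noteq> 0\<^sub>v n" using norm_v by auto
  interpret cof_vec_space n "TYPE(complex)" .
  define b where "b = basis_completion v"
  note bc = basis_completion[OF v \<open>v \<noteq> 0\<^sub>v n\<close>, folded b_def]
  define ws where "ws = gram_schmidt n b"
  note gs = gram_schmidt_result[OF bc(2) bc(4) bc(5) ws_def]
  from bc(6,7) n obtain vs where "b = v # vs" by (cases b) auto
  then have "hd ws = v" unfolding ws_def using v by simp
  have len_ws: "length ws = n" using gs bc by simp
  have ws0: "ws ! 0 = v" using \<open>hd ws = v\<close> len_ws n by (cases ws) auto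
  define W where "W = mat n n (\<lambda>(k, i). ws ! i $ k / of_real (sqrt (\<Sum>j<n. (cmod (ws ! i $ j))\<^sup>2)))"
  have "unitary n W" unfolding W_def by (rule unitary_normalize_orthogonal_cols[OF len_ws gs(3,2)])
  moreover have "col W 0 = v" unfolding W_def using n ws0 norm_v v by (intro eq_vecI) auto
  ultimately show ?thesis by (rule that)
qed

lemma col_adjoint_mult_mult_eigenvector:
  fixes A W :: "complex mat"
  assumes W: "unitary n W" and A: "A \<in> carrier_mat n n" and j: "j < n"
    and ev: "A *\<^sub>v col W j = e \<cdot>\<^sub>v col W j"
  shows "col (mat_adjoint W * A * W) j = e \<cdot>\<^sub>v unit_vec n j"
proof -
  have Wc: "W \<in> carrier_mat n n" using W by (rule unitary_carrier)
  have W': "mat_adjoint W \<in> carrier_mat n n" using Wc by simp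
  have W'A: "mat_adjoint W * A \<in> carrier_mat n n" using W' A by simp
  have cW: "col W j \<in> carrier_vec n" using Wc by (intro carrier_vecI) simp
  have "col (mat_adjoint W * A * W) j = mat_adjoint W *\<^sub>v (A *\<^sub>v col W j)"
    using col_mult2[OF W'A Wc j] assoc_mult_mat_vec[OF W' A cW] by simp
  also have "\<dots> = e \<cdot>\<^sub>v (mat_adjoint W *\<^sub>v col W j)" using ev mult_mat_vec[OF W' cW] by simp
  also have "mat_adjoint W *\<^sub>v col W j = col (mat_adjoint W * W) j" using col_mult2[OF W' Wc j] by simp
  also have "\<dots> = unit_vec n j" using W j by (simp add: unitary_def)
  finally show ?thesis .
qed

lemma mat_adjoint_four_block_diag:
  fixes A D :: "complex mat"
  assumes "A \<in> carrier_mat n n" "D \<in> carrier_mat m m"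
  shows "mat_adjoint (four_block_mat A (0\<^sub>m n m) (0\<^sub>m m n) D)
    = four_block_mat (mat_adjoint A) (0\<^sub>m n m) (0\<^sub>m m n) (mat_adjoint D)"
  using assms by (intro eq_matI) auto

lemma four_block_one_conj:
  fixes a D V :: "complex mat"
  assumes a: "a \<in> carrier_mat 1 1" and D: "D \<in> carrier_mat m m" and V: "V \<in> carrier_mat m m"
  shows "mat_adjoint (four_block_mat (1\<^sub>m 1) (0\<^sub>m 1 m) (0\<^sub>m m 1) V)
      * four_block_mat a (0\<^sub>m 1 m) (0\<^sub>m m 1) D * four_block_mat (1\<^sub>m 1) (0\<^sub>m 1 m) (0\<^sub>m m 1) V
    = four_block_mat a (0\<^sub>m 1 m) (0\<^sub>m m 1) (mat_adjoint V * D * V)"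
proof -
  have V': "mat_adjoint V \<in> carrier_mat m m" using V by simp
  have V'D: "mat_adjoint V * D \<in> carrier_mat m m" using V' D by simp
  have "mat_adjoint (four_block_mat (1\<^sub>m 1) (0\<^sub>m 1 m) (0\<^sub>m m 1) V) * four_block_mat a (0\<^sub>m 1 m) (0\<^sub>m m 1) D
      = four_block_mat a (0\<^sub>m 1 m) (0\<^sub>m m 1) (mat_adjoint V * D)"
    unfolding mat_adjoint_four_block_diag[OF one_carrier_mat V]
    using mult_four_block_mat[OF one_carrier_mat zero_carrier_mat zero_carrier_mat V'
        a zero_carrier_mat zero_carrier_mat D] a D V' V
    by (simp add: carrier_matD)
  then show ?thesis
    using mult_four_block_mat[OF a zero_carrier_mat zero_carrier_mat V'D
        one_carrier_mat zero_carrier_mat zero_carrier_mat V] a V'D V D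
    by (simp add: carrier_matD)
qed

lemma unitary_four_block_one:
  assumes "unitary m V"
  shows "unitary (Suc m) (four_block_mat (1\<^sub>m 1) (0\<^sub>m 1 m) (0\<^sub>m m 1) V)"
proof -
  have V: "V \<in> carrier_mat m m" using assms by (rule unitary_carrier)
  have "four_block_mat (1\<^sub>m 1) (0\<^sub>m 1 m) (0\<^sub>m m 1) V \<in> carrier_mat (Suc m) (Suc m)"
    using four_block_carrier_mat[OF one_carrier_mat[of 1] V, of "0\<^sub>m 1 m" "0\<^sub>m m 1"] by simp
  moreover have "mat_adjoint (four_block_mat (1\<^sub>m 1) (0\<^sub>m 1 m) (0\<^sub>m m 1) V)
      * four_block_mat (1\<^sub>m 1) (0\<^sub>m 1 m) (0\<^sub>m m 1) V = 1\<^sub>m (Suc m)"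
    using four_block_one_conj[OF one_carrier_mat one_carrier_mat V] V assms
    by (simp add: unitary_def)
  ultimately show ?thesis by (simp add: unitary_def)
qed

lemma diagonal_mat_four_block_one:
  fixes a D :: "complex mat"
  assumes "a \<in> carrier_mat 1 1" "D \<in> carrier_mat m m" "diagonal_mat D"
  shows "diagonal_mat (four_block_mat a (0\<^sub>m 1 m) (0\<^sub>m m 1) D)"
  using assms unfolding diagonal_mat_def by (auto simp: carrier_matD)

lemma hermitian_block_diag_if_first_col:
  fixes A :: "complex mat"
  assumes A: "A \<in> carrier_mat (Suc m) (Suc m)" "hermitian A"
    and col0: "\<And>i. 0 < i \<Longrightarrow> i < Suc m \<Longrightarrow> A $$ (i, 0) = 0"
  defines "A3 \<equiv> mat m m (\<lambda>(i, j). A $$ (Suc i, Suc j))"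
  shows "A = four_block_mat (mat 1 1 (\<lambda>_. A $$ (0, 0))) (0\<^sub>m 1 m) (0\<^sub>m m 1) A3"
    and "hermitian A3"
proof -
  have row0: "A $$ (0, j) = 0" if "0 < j" "j < Suc m" for j
    using hermitian_index[OF A that(2), of 0] col0[OF that] by simp
  have A3: "A3 \<in> carrier_mat m m" unfolding A3_def by simp
  show "A = four_block_mat (mat 1 1 (\<lambda>_. A $$ (0, 0))) (0\<^sub>m 1 m) (0\<^sub>m m 1) A3"
  proof (rule eq_matI)
    fix i j assume "i < dim_row (four_block_mat (mat 1 1 (\<lambda>_. A $$ (0, 0))) (0\<^sub>m 1 m) (0\<^sub>m m 1) A3)"
      "j < dim_col (four_block_mat (mat 1 1 (\<lambda>_. A $$ (0, 0))) (0\<^sub>m 1 m) (0\<^sub>m m 1) A3)"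
    then have "i < Suc m" "j < Suc m" using A3 by auto
    then show "A $$ (i, j) = four_block_mat (mat 1 1 (\<lambda>_. A $$ (0, 0))) (0\<^sub>m 1 m) (0\<^sub>m m 1) A3 $$ (i, j)"
      using col0 row0 A3 by (cases i; cases j) (auto simp: A3_def)
  qed (use A A3 in auto)
  show "hermitian A3" unfolding hermitian_iff_index[OF A3]
  proof (intro allI impI)
    fix i j assume "i < m" "j < m"
    then show "A3 $$ (j, i) = cnj (A3 $$ (i, j))"
      using hermitian_index[OF A, of "Suc i" "Suc j"] by (simp add: A3_def)
  qed
qed

text \<open>Deflation: conjugating by a unitary whose first column is an eigenvector splits off a
  1 x 1 block.\<close>

lemma hermitian_deflation:
  fixes A :: "complex mat"
  assumes A: "A \<in> carrier_mat (Suc m) (Suc m)" and "hermitian A"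
  obtains W a A3 where "unitary (Suc m) W" "a \<in> carrier_mat 1 1" "A3 \<in> carrier_mat m m" "hermitian A3"
    "mat_adjoint W * A * W = four_block_mat a (0\<^sub>m 1 m) (0\<^sub>m m 1) A3"
proof -
  obtain v e where v: "v \<in> carrier_vec (Suc m)" "(\<Sum>k<Suc m. (cmod (v $ k))\<^sup>2) = 1"
    and ev: "A *\<^sub>v v = e \<cdot>\<^sub>v v"
    using unit_eigenvector_exists[OF A] by blast
  obtain W where W: "unitary (Suc m) W" and "col W 0 = v"
    using unitary_with_first_column[OF v] by blast
  have Wc: "W \<in> carrier_mat (Suc m) (Suc m)" using W by (rule unitary_carrier)
  define A' where "A' = mat_adjoint W * A * W"
  have A': "A' \<in> carrier_mat (Suc m) (Suc m)" unfolding A'_def by (rule adjoint_mult_mult_carrier[OF Wc A])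
  have "hermitian A'" unfolding A'_def by (rule hermitian_adjoint_mult_mult[OF Wc A \<open>hermitian A\<close>])
  have "col A' 0 = e \<cdot>\<^sub>v unit_vec (Suc m) 0"
    unfolding A'_def using col_adjoint_mult_mult_eigenvector[OF W A] ev \<open>col W 0 = v\<close> by simp
  then have col0: "A' $$ (i, 0) = 0" if "0 < i" "i < Suc m" for i
  proof -
    have "A' $$ (i, 0) = col A' 0 $ i" using that A' by simp
    also have "\<dots> = 0" using \<open>col A' 0 = _\<close> that by simp
    finally show ?thesis .
  qed
  have "A' = four_block_mat (mat 1 1 (\<lambda>_. A' $$ (0, 0))) (0\<^sub>m 1 m) (0\<^sub>m m 1)
      (mat m m (\<lambda>(i, j). A' $$ (Suc i, Suc j)))"
    "hermitian (mat m m (\<lambda>(i, j). A' $$ (Suc i, Suc j)))"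
    using hermitian_block_diag_if_first_col[OF A' \<open>hermitian A'\<close>] col0 by blast+
  then show ?thesis
    using that[OF W, of "mat 1 1 (\<lambda>_. A' $$ (0, 0))" "mat m m (\<lambda>(i, j). A' $$ (Suc i, Suc j))"]
    unfolding A'_def by simp
qed

theorem hermitian_unitary_diagonalizable:
  fixes A :: "complex mat"
  assumes "A \<in> carrier_mat n n" "hermitian A"
  shows "\<exists>U. unitary n U \<and> diagonal_mat (mat_adjoint U * A * U)"
  using assms
proof (induction n arbitrary: A)
  case 0
  then have "diagonal_mat (mat_adjoint (1\<^sub>m 0) * A * 1\<^sub>m 0)" by (simp add: diagonal_mat_def)
  moreover have "unitary 0 (1\<^sub>m 0)" by (simp add: unitary_def)
  ultimately show ?case by blast
next
  case (Suc m)
  then have A: "A \<in> carrier_mat (Suc m) (Suc m)" and "hermitian A" by auto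
  obtain W a A3 where W: "unitary (Suc m) W" and a: "a \<in> carrier_mat 1 1"
    and A3: "A3 \<in> carrier_mat m m" "hermitian A3"
    and blocks: "mat_adjoint W * A * W = four_block_mat a (0\<^sub>m 1 m) (0\<^sub>m m 1) A3"
    using hermitian_deflation[OF A \<open>hermitian A\<close>] by blast
  obtain V where V: "unitary m V" and diag: "diagonal_mat (mat_adjoint V * A3 * V)"
    using Suc.IH[OF A3] by blast
  define B where "B = four_block_mat (1\<^sub>m 1) (0\<^sub>m 1 m) (0\<^sub>m m 1) V"
  have B: "unitary (Suc m) B" unfolding B_def by (rule unitary_four_block_one[OF V])
  have Wc: "W \<in> carrier_mat (Suc m) (Suc m)" and Bc: "B \<in> carrier_mat (Suc m) (Suc m)"
    using W B by (simp_all add: unitary_carrier)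
  have "mat_adjoint (W * B) * A * (W * B) = mat_adjoint B * (mat_adjoint W * A * W) * B"
    unfolding mat_adjoint_mult[OF Wc Bc]
    using mat_mult_regroup[of "mat_adjoint B" "Suc m" "mat_adjoint W" A W B] Wc Bc A by simp
  also have "\<dots> = four_block_mat a (0\<^sub>m 1 m) (0\<^sub>m m 1) (mat_adjoint V * A3 * V)"
    unfolding B_def blocks by (rule four_block_one_conj[OF a A3(1) unitary_carrier[OF V]])
  finally have "diagonal_mat (mat_adjoint (W * B) * A * (W * B))"
    using diagonal_mat_four_block_one[OF a adjoint_mult_mult_carrier[OF unitary_carrier[OF V] A3(1)] diag]
    by simp
  then show ?case using unitary_mult[OF W B] by blast
qed

section \<open>Negative traces\<close>

lemma proots_prod_linear: "proots (\<Prod>a\<leftarrow>xs. [:- a, 1:]) = mset (xs :: complex list)"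
proof (induction xs)
  case Nil
  then show ?case by simp
next
  case (Cons x xs)
  have "(\<Prod>a\<leftarrow>xs. [:- a, 1:]) \<noteq> 0" by (auto simp: prod_list_zero_iff)
  moreover have "[:- x, 1:] \<noteq> (0 :: complex poly)" by simp
  moreover have "(\<Prod>a\<leftarrow>x # xs. [:- a, 1:]) = [:- x, 1:] * (\<Prod>a\<leftarrow>xs. [:- a, 1:])" by simp
  ultimately have "proots (\<Prod>a\<leftarrow>x # xs. [:- a, 1:]) = proots [:- x, 1:] + proots (\<Prod>a\<leftarrow>xs. [:- a, 1:])"
    by (metis proots_mult)
  then show ?case using Cons by (simp add: proots_linear_factor)
qed

lemma neg_trace_unitary_diagonal:
  fixes A U :: "complex mat"
  assumes A: "A \<in> carrier_mat n n" and U: "unitary n U" and diag: "diagonal_mat (mat_adjoint U * A * U)"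
  shows "neg_trace A = (\<Sum>i<n. min (Re ((mat_adjoint U * A * U) $$ (i, i))) 0)"
proof -
  define D where "D = mat_adjoint U * A * U"
  have Uc: "U \<in> carrier_mat n n" using U by (rule unitary_carrier)
  have U': "mat_adjoint U \<in> carrier_mat n n" using Uc by simp
  have D: "D \<in> carrier_mat n n" unfolding D_def by (rule adjoint_mult_mult_carrier[OF Uc A])
  have UU': "U * mat_adjoint U = 1\<^sub>m n" by (rule unitary_mult_adjoint[OF U])
  have "U * D * mat_adjoint U = (U * mat_adjoint U) * A * (U * mat_adjoint U)"
    unfolding D_def using mat_mult_regroup[OF Uc U' A Uc U'] by simp
  then have "A = U * D * mat_adjoint U" using UU' A by simp
  then have "similar_mat_wit A D U (mat_adjoint U)"
    unfolding similar_mat_wit_def Let_def using A D Uc U' UU' U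
    by (auto simp: unitary_def simp del: assoc_mult_mat)
  then have "similar_mat A D" unfolding similar_mat_def by blast
  moreover have "upper_triangular D"
    using diag D unfolding D_def upper_triangular_def diagonal_mat_def by auto
  ultimately have "char_poly A = (\<Prod>a\<leftarrow>diag_mat D. [:- a, 1:])"
    using char_poly_similar char_poly_upper_triangular[OF D] by metis
  then have "proots (char_poly A) = mset (diag_mat D)" by (simp add: proots_prod_linear)
  then have "neg_trace A = sum_list (map (\<lambda>z. min (Re z) 0) (diag_mat D))"
    unfolding neg_trace_def by (simp only: mset_map[symmetric] sum_mset_sum_list)
  also have "\<dots> = (\<Sum>i<n. min (Re (D $$ (i, i))) 0)"
    unfolding diag_mat_def using D by (simp add: sum_list_distinct_conv_sum_set atLeast0LessThan)
  finally show ?thesis unfolding D_def .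
qed

definition quad_form :: "nat \<Rightarrow> complex mat \<Rightarrow> (nat \<Rightarrow> complex) \<Rightarrow> complex" where
  "quad_form n A u = (\<Sum>x<n. \<Sum>y<n. cnj (u x) * A $$ (x, y) * u y)"

lemma quad_form_col:
  assumes "A \<in> carrier_mat n n" "X \<in> carrier_mat n m" "i < m"
  shows "quad_form n A (\<lambda>k. X $$ (k, i)) = (mat_adjoint X * A * X) $$ (i, i)"
  unfolding quad_form_def using index_adjoint_mult_mult[OF assms(2,1,3,3)] by simp

lemma Re_cnj_mult_real_mult: "Im r = 0 \<Longrightarrow> Re (cnj z * r * z) = Re r * (cmod z)\<^sup>2"
  by (cases z; cases r) (simp add: cmod_def power2_eq_square algebra_simps)

lemma Re_index_adjoint_mult_diagonal:
  fixes C E :: "complex mat"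
  assumes C: "C \<in> carrier_mat n m" and E: "E \<in> carrier_mat n n" "diagonal_mat E"
    and E_real: "\<And>k. k < n \<Longrightarrow> Im (E $$ (k, k)) = 0" and i: "i < m"
  shows "Re ((mat_adjoint C * E * C) $$ (i, i)) = (\<Sum>k<n. Re (E $$ (k, k)) * (cmod (C $$ (k, i)))\<^sup>2)"
proof -
  have "(mat_adjoint C * E * C) $$ (i, i) = (\<Sum>k<n. \<Sum>l<n. cnj (C $$ (k, i)) * E $$ (k, l) * C $$ (l, i))"
    by (rule index_adjoint_mult_mult[OF C E(1) i i])
  also have "\<dots> = (\<Sum>k<n. cnj (C $$ (k, i)) * E $$ (k, k) * C $$ (k, i))"
  proof (rule sum.cong[OF refl])
    fix k assume k: "k \<in> {..<n}"
    have "(\<Sum>l<n. cnj (C $$ (k, i)) * E $$ (k, l) * C $$ (l, i))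
        = (\<Sum>l\<in>{k}. cnj (C $$ (k, i)) * E $$ (k, l) * C $$ (l, i))"
      by (rule sum.mono_neutral_right) (use k E in \<open>auto simp: diagonal_mat_def\<close>)
    then show "(\<Sum>l<n. cnj (C $$ (k, i)) * E $$ (k, l) * C $$ (l, i))
        = cnj (C $$ (k, i)) * E $$ (k, k) * C $$ (k, i)" by simp
  qed
  finally have "Re ((mat_adjoint C * E * C) $$ (i, i))
      = (\<Sum>k<n. Re (cnj (C $$ (k, i)) * E $$ (k, k) * C $$ (k, i)))" by (simp only: Re_sum)
  also have "\<dots> = (\<Sum>k<n. Re (E $$ (k, k)) * (cmod (C $$ (k, i)))\<^sup>2)"
    using E_real by (intro sum.cong refl Re_cnj_mult_real_mult) auto
  finally show ?thesis .
qed

lemma Re_quad_form_eigenbasis: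
  fixes M W X :: "complex mat"
  assumes M: "M \<in> carrier_mat n n" "hermitian M" and W: "unitary n W"
    and diag: "diagonal_mat (mat_adjoint W * M * W)" and X: "X \<in> carrier_mat n n" and i: "i < n"
  shows "Re (quad_form n M (\<lambda>k. X $$ (k, i)))
    = (\<Sum>k<n. Re ((mat_adjoint W * M * W) $$ (k, k)) * (cmod ((mat_adjoint W * X) $$ (k, i)))\<^sup>2)"
proof -
  define E where "E = mat_adjoint W * M * W"
  have Wc: "W \<in> carrier_mat n n" using W by (rule unitary_carrier)
  have W': "mat_adjoint W \<in> carrier_mat n n" and X': "mat_adjoint X \<in> carrier_mat n n"
    using Wc X by simp_all
  have E: "E \<in> carrier_mat n n" unfolding E_def by (rule adjoint_mult_mult_carrier[OF Wc M(1)])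
  have E_real: "Im (E $$ (k, k)) = 0" if "k < n" for k
    using hermitian_diag_real[OF E _ that] hermitian_adjoint_mult_mult[OF Wc M] unfolding E_def by simp
  have "W * E * mat_adjoint W = (W * mat_adjoint W) * M * (W * mat_adjoint W)"
    unfolding E_def using mat_mult_regroup[OF Wc W' M(1) Wc W'] by simp
  then have M_eq: "M = W * E * mat_adjoint W" using unitary_mult_adjoint[OF W] M(1) by simp
  have "mat_adjoint (mat_adjoint W * X) * E * (mat_adjoint W * X) = mat_adjoint X * (W * E * mat_adjoint W) * X"
    unfolding mat_adjoint_mult[OF W' X] mat_adjoint_mat_adjoint
    by (rule mat_mult_regroup[OF X' Wc E W' X])
  then have "mat_adjoint X * M * X = mat_adjoint (mat_adjoint W * X) * E * (mat_adjoint W * X)"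
    using M_eq by simp
  then show ?thesis
    using quad_form_col[OF M(1) X i] diag E_real W' X
      Re_index_adjoint_mult_diagonal[of "mat_adjoint W * X" n n E i] E i
    unfolding E_def by simp
qed

text \<open>In an eigenbasis W of M, the i-th column of U has coordinates C k i with C = W* U; for
  i ranging over S the weights of each eigenvalue sum to a partial row norm of the unitary C,
  which lies in [0, 1].\<close>

lemma neg_trace_le_sum_quad_form:
  fixes M U :: "complex mat"
  assumes M: "M \<in> carrier_mat n n" "hermitian M" and U: "unitary n U" and S: "S \<subseteq> {..<n}"
  shows "neg_trace M \<le> (\<Sum>i\<in>S. Re (quad_form n M (\<lambda>k. U $$ (k, i))))"
proof -
  obtain W where W: "unitary n W" and diag: "diagonal_mat (mat_adjoint W * M * W)"
    using hermitian_unitary_diagonalizable[OF M] by blast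
  define C where "C = mat_adjoint W * U"
  define ev where "ev k = Re ((mat_adjoint W * M * W) $$ (k, k))" for k
  have C: "unitary n C" unfolding C_def by (rule unitary_mult[OF unitary_adjoint[OF W] U])
  have "neg_trace M = (\<Sum>k<n. min (ev k) 0)"
    unfolding ev_def by (rule neg_trace_unitary_diagonal[OF M(1) W diag])
  also have "\<dots> \<le> (\<Sum>k<n. ev k * (\<Sum>i\<in>S. (cmod (C $$ (k, i)))\<^sup>2))"
  proof (rule sum_mono)
    fix k assume "k \<in> {..<n}"
    define t where "t = (\<Sum>i\<in>S. (cmod (C $$ (k, i)))\<^sup>2)"
    have "t \<le> 1" unfolding t_def using sum_row_norm_unitary_le_1[OF C _ S] \<open>k \<in> {..<n}\<close> by simp
    moreover have "0 \<le> t" unfolding t_def by (simp add: sum_nonneg)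
    ultimately have "min (ev k) 0 \<le> ev k * t"
      using mult_left_mono_neg[of t 1 "ev k"] by (cases "0 \<le> ev k") auto
    then show "min (ev k) 0 \<le> ev k * (\<Sum>i\<in>S. (cmod (C $$ (k, i)))\<^sup>2)" unfolding t_def .
  qed
  also have "\<dots> = (\<Sum>i\<in>S. \<Sum>k<n. ev k * (cmod (C $$ (k, i)))\<^sup>2)"
    by (simp add: sum_distrib_left) (rule sum.swap)
  also have "\<dots> = (\<Sum>i\<in>S. Re (quad_form n M (\<lambda>k. U $$ (k, i))))"
    using Re_quad_form_eigenbasis[OF M W diag unitary_carrier[OF U]] S
    unfolding ev_def C_def by (intro sum.cong refl) auto
  finally show ?thesis .
qed

theorem neg_trace_ge_of_quad_form_ge:
  fixes H M :: "complex mat" and w :: "nat \<Rightarrow> real"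
  assumes H: "H \<in> carrier_mat n n" "hermitian H" and M: "M \<in> carrier_mat n n" "hermitian M"
    and w: "\<And>x. 0 \<le> w x"
    and quad_ge: "\<And>u. Re (quad_form n M u) - (\<Sum>x<n. w x * (cmod (u x))\<^sup>2) \<le> Re (quad_form n H u)"
  shows "neg_trace M - (\<Sum>x<n. w x) \<le> neg_trace H"
proof -
  obtain U where U: "unitary n U" and diag: "diagonal_mat (mat_adjoint U * H * U)"
    using hermitian_unitary_diagonalizable[OF H] by blast
  have Uc: "U \<in> carrier_mat n n" using U by (rule unitary_carrier)
  define ev where "ev i = Re ((mat_adjoint U * H * U) $$ (i, i))" for i
  define S where "S = {i \<in> {..<n}. ev i < 0}"
  define u where "u i k = U $$ (k, i)" for i k
  have S: "S \<subseteq> {..<n}" unfolding S_def by auto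
  have weights: "(\<Sum>x<n. w x * (\<Sum>i\<in>S. (cmod (u i x))\<^sup>2)) \<le> (\<Sum>x<n. w x)"
  proof (rule sum_mono)
    fix x assume "x \<in> {..<n}"
    then have "(\<Sum>i\<in>S. (cmod (u i x))\<^sup>2) \<le> 1"
      unfolding u_def using sum_row_norm_unitary_le_1[OF U _ S] by simp
    then show "w x * (\<Sum>i\<in>S. (cmod (u i x))\<^sup>2) \<le> w x" using w[of x] by (simp add: mult_left_le)
  qed
  have "(\<Sum>x<n. w x * (\<Sum>i\<in>S. (cmod (u i x))\<^sup>2)) = (\<Sum>i\<in>S. \<Sum>x<n. w x * (cmod (u i x))\<^sup>2)"
    by (simp add: sum_distrib_left) (rule sum.swap)
  moreover have "neg_trace M \<le> (\<Sum>i\<in>S. Re (quad_form n M (u i)))"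
    unfolding u_def by (rule neg_trace_le_sum_quad_form[OF M U S])
  ultimately have "neg_trace M - (\<Sum>x<n. w x)
      \<le> (\<Sum>i\<in>S. Re (quad_form n M (u i)) - (\<Sum>x<n. w x * (cmod (u i x))\<^sup>2))"
    using weights by (simp add: sum_subtractf)
  also have "\<dots> \<le> (\<Sum>i\<in>S. Re (quad_form n H (u i)))" by (intro sum_mono quad_ge)
  also have "\<dots> = (\<Sum>i\<in>S. ev i)"
    using quad_form_col[OF H(1) Uc] S unfolding ev_def u_def by (intro sum.cong refl) auto
  also have "\<dots> = (\<Sum>i<n. if ev i < 0 then ev i else 0)"
    unfolding S_def by (rule sum.inter_filter) simp
  also have "\<dots> = (\<Sum>i<n. min (ev i) 0)" by (intro sum.cong refl) auto
  also have "\<dots> = neg_trace H"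
    unfolding ev_def by (rule neg_trace_unitary_diagonal[OF H(1) U diag, symmetric])
  finally show ?thesis .
qed

section \<open>Localization of the quadratic form\<close>

lemma index_proj_mult_proj:
  fixes H :: "complex mat"
  assumes H: "H \<in> carrier_mat N N" and x: "x < N" and y: "y < N"
  shows "(proj N \<Omega> * H * proj N \<Omega>) $$ (x, y) = (if x \<in> \<Omega> \<and> y \<in> \<Omega> then H $$ (x, y) else 0)"
proof -
  have P: "proj N \<Omega> \<in> carrier_mat N N" unfolding proj_def by simp
  have PH: "(proj N \<Omega> * H) $$ (x, l) = (if x \<in> \<Omega> then H $$ (x, l) else 0)" if "l < N" for l
  proof -
    have "(proj N \<Omega> * H) $$ (x, l) = (\<Sum>k<N. proj N \<Omega> $$ (x, k) * H $$ (k, l))"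
      using P H x that by (intro index_mult_mat_sum) auto
    also have "\<dots> = (\<Sum>k<N. if k = x then (if x \<in> \<Omega> then H $$ (x, l) else 0) else 0)"
      using x unfolding proj_def by (intro sum.cong refl) auto
    finally show ?thesis using x by simp
  qed
  have "(proj N \<Omega> * H * proj N \<Omega>) $$ (x, y) = (\<Sum>l<N. (proj N \<Omega> * H) $$ (x, l) * proj N \<Omega> $$ (l, y))"
    using P H x y by (intro index_mult_mat_sum[of _ N N]) auto
  also have "\<dots> = (\<Sum>l<N. if l = y then (if x \<in> \<Omega> \<and> y \<in> \<Omega> then H $$ (x, y) else 0) else 0)"
    using y PH unfolding proj_def by (intro sum.cong refl) auto
  finally show ?thesis using y by simp
qed

lemma Re_quad_form_sub_proj:
  fixes H :: "complex mat" and a :: "nat \<Rightarrow> real" and T :: "nat \<Rightarrow> nat \<Rightarrow> real"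
  assumes H: "H \<in> carrier_mat N N"
    and H_index: "\<And>x y. x < N \<Longrightarrow> y < N \<Longrightarrow> H $$ (x, y) = of_real ((if x = y then a x else 0) - T x y)"
  shows "Re (quad_form N H u) - Re (quad_form N (proj N \<Omega> * H * proj N \<Omega>) u)
    = (\<Sum>x<N. if x \<in> \<Omega> then 0 else a x * (cmod (u x))\<^sup>2)
      - (\<Sum>x<N. \<Sum>y<N. (if x \<in> \<Omega> \<and> y \<in> \<Omega> then 0 else T x y) * Re (cnj (u x) * u y))"
proof -
  have entry: "Re (cnj (u x) * H $$ (x, y) * u y) - Re (cnj (u x) * (proj N \<Omega> * H * proj N \<Omega>) $$ (x, y) * u y)
      = (if y = x then (if x \<in> \<Omega> then 0 else a x * (cmod (u x))\<^sup>2) else 0)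
        - (if x \<in> \<Omega> \<and> y \<in> \<Omega> then 0 else T x y) * Re (cnj (u x) * u y)"
    if "x < N" "y < N" for x y
  proof -
    define h where "h = (if x = y then a x else 0) - T x y"
    define R where "R = Re (cnj (u x) * u y)"
    have Re_real: "Re (cnj (u x) * complex_of_real r * u y) = r * R" for r
      unfolding R_def by (simp add: mult.commute mult.left_commute)
    have "Re (cnj (u x) * H $$ (x, y) * u y) - Re (cnj (u x) * (proj N \<Omega> * H * proj N \<Omega>) $$ (x, y) * u y)
        = (if x \<in> \<Omega> \<and> y \<in> \<Omega> then 0 else h) * R"
      using that Re_real[of h] Re_real[of 0]
      by (simp add: index_proj_mult_proj[OF H that] H_index[OF that, folded h_def])
    also have "\<dots> = (if y = x then (if x \<in> \<Omega> then 0 else a x * (cmod (u x))\<^sup>2) else 0)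
        - (if x \<in> \<Omega> \<and> y \<in> \<Omega> then 0 else T x y) * R"
    proof -
      have "R = (cmod (u x))\<^sup>2" if "y = x"
        unfolding R_def that by (metis Re_complex_of_real complex_norm_square mult.commute)
      then show ?thesis by (cases "y = x") (auto simp: h_def algebra_simps)
    qed
    finally show ?thesis by (simp only: R_def)
  qed
  have "Re (quad_form N H u) - Re (quad_form N (proj N \<Omega> * H * proj N \<Omega>) u)
      = (\<Sum>x<N. \<Sum>y<N. (if y = x then (if x \<in> \<Omega> then 0 else a x * (cmod (u x))\<^sup>2) else 0)
          - (if x \<in> \<Omega> \<and> y \<in> \<Omega> then 0 else T x y) * Re (cnj (u x) * u y))"
    unfolding quad_form_def Re_sum sum_subtractf[symmetric] by (intro sum.cong refl entry) auto
  also have "\<dots> = (\<Sum>x<N. (if x \<in> \<Omega> then 0 else a x * (cmod (u x))\<^sup>2)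
      - (\<Sum>y<N. (if x \<in> \<Omega> \<and> y \<in> \<Omega> then 0 else T x y) * Re (cnj (u x) * u y)))"
    by (intro sum.cong refl) (simp add: sum_subtractf)
  finally show ?thesis by (simp add: sum_subtractf)
qed

lemma sum_sum_symmetrize:
  fixes c p :: "'a \<Rightarrow> 'a \<Rightarrow> 'b :: comm_semiring_1"
  assumes "\<And>x y. c x y = c y x"
  shows "(\<Sum>x\<in>A. \<Sum>y\<in>A. c x y * (p x y + p y x)) = 2 * (\<Sum>x\<in>A. \<Sum>y\<in>A. c x y * p x y)"
proof -
  have "(\<Sum>x\<in>A. \<Sum>y\<in>A. c x y * p y x) = (\<Sum>x\<in>A. \<Sum>y\<in>A. c y x * p x y)"
    by (rule sum.swap)
  also have "\<dots> = (\<Sum>x\<in>A. \<Sum>y\<in>A. c x y * p x y)" by (intro sum.cong refl) (metis assms)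
  finally have swap: "(\<Sum>x\<in>A. \<Sum>y\<in>A. c x y * p y x) = (\<Sum>x\<in>A. \<Sum>y\<in>A. c x y * p x y)" .
  have "(\<Sum>x\<in>A. \<Sum>y\<in>A. c x y * (p x y + p y x))
      = (\<Sum>x\<in>A. \<Sum>y\<in>A. c x y * p x y) + (\<Sum>x\<in>A. \<Sum>y\<in>A. c x y * p y x)"
    by (simp add: distrib_left sum.distrib)
  then show ?thesis unfolding swap by (simp add: mult_2)
qed

lemma Re_cnj_mult_le:
  fixes a b :: complex
  assumes "0 < t" "4 * s * t = 1"
  shows "Re (cnj a * b) \<le> s * (cmod a)\<^sup>2 + t * (cmod b)\<^sup>2"
proof -
  have "Re (cnj a * b) \<le> cmod a * cmod b"
    using complex_Re_le_cmod[of "cnj a * b"] by (simp add: norm_mult)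
  moreover have "0 \<le> t * (2 * s * cmod a - cmod b)\<^sup>2" using assms(1) by simp
  moreover have "t * (2 * s * cmod a - cmod b)\<^sup>2
      = (4 * s * t) * s * (cmod a)\<^sup>2 - (4 * s * t) * (cmod a * cmod b) + t * (cmod b)\<^sup>2"
    by (simp add: power2_eq_square algebra_simps)
  ultimately show ?thesis unfolding assms(2) by linarith
qed

definition inner_bdry :: "nat \<Rightarrow> nat set \<Rightarrow> (nat \<Rightarrow> nat \<Rightarrow> real) \<Rightarrow> nat set" where
  "inner_bdry N \<Omega> T = {x. x < N \<and> x \<in> \<Omega> \<and> (\<exists>y<N. y \<notin> \<Omega> \<and> T x y \<noteq> 0)}"

lemma row_bound_pos_if_bond:
  fixes T :: "nat \<Rightarrow> nat \<Rightarrow> real"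
  assumes T_nonneg: "\<And>x y. 0 \<le> T x y" and T_row: "\<And>x. x < N \<Longrightarrow> (\<Sum>y<N. T x y) \<le> K"
    and "x < N" "y < N" "T x y \<noteq> 0"
  shows "0 < K"
proof -
  have "T x y \<le> (\<Sum>y<N. T x y)" by (rule member_le_sum) (use assms in auto)
  then show ?thesis using T_row[OF \<open>x < N\<close>] T_nonneg[of x y] \<open>T x y \<noteq> 0\<close> by linarith
qed

text \<open>Each bond between x in \<Omega> and y outside \<Omega> is split by AM-GM with weight \<epsilon> on the
  side of x and 1/\<epsilon> on the side of y. With \<epsilon> = K/s the share of y is paid for by the
  potential, which exceeds K + s outside \<Omega>.\<close>

definition bond_share :: "nat set \<Rightarrow> real \<Rightarrow> nat \<Rightarrow> nat \<Rightarrow> real" where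
  "bond_share \<Omega> \<epsilon> x y = (if x \<in> \<Omega> then \<epsilon> / 2 else if y \<in> \<Omega> then 1 / (2 * \<epsilon>) else 1 / 2)"

lemma Re_cnj_mult_le_bond_share:
  assumes "0 < \<epsilon>" "\<not> (x \<in> \<Omega> \<and> y \<in> \<Omega>)"
  shows "Re (cnj a * b) \<le> bond_share \<Omega> \<epsilon> x y * (cmod a)\<^sup>2 + bond_share \<Omega> \<epsilon> y x * (cmod b)\<^sup>2"
proof -
  have "0 < bond_share \<Omega> \<epsilon> y x" "4 * bond_share \<Omega> \<epsilon> x y * bond_share \<Omega> \<epsilon> y x = 1"
    using assms unfolding bond_share_def by (auto simp: field_simps)
  then show ?thesis by (rule Re_cnj_mult_le)
qed

lemma sum_bond_share_inside_le:
  fixes T :: "nat \<Rightarrow> nat \<Rightarrow> real" and K s :: real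
  assumes T_nonneg: "\<And>x y. 0 \<le> T x y" and T_row: "\<And>x. x < N \<Longrightarrow> (\<Sum>y<N. T x y) \<le> K"
    and "0 < s" and x: "x < N" "x \<in> \<Omega>"
  shows "(\<Sum>y<N. 2 * (if x \<in> \<Omega> \<and> y \<in> \<Omega> then 0 else T x y) * bond_share \<Omega> (K / s) x y)
    \<le> (if x \<in> inner_bdry N \<Omega> T then K\<^sup>2 / s else 0)"
proof -
  have "(\<Sum>y<N. 2 * (if x \<in> \<Omega> \<and> y \<in> \<Omega> then 0 else T x y) * bond_share \<Omega> (K / s) x y)
      = (\<Sum>y<N. K / s * (if y \<in> \<Omega> then 0 else T x y))"
    using x(2) unfolding bond_share_def by (intro sum.cong refl) auto
  also have "\<dots> = K / s * (\<Sum>y<N. if y \<in> \<Omega> then 0 else T x y)"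
    by (simp add: sum_distrib_left)
  also have "\<dots> \<le> (if x \<in> inner_bdry N \<Omega> T then K\<^sup>2 / s else 0)"
  proof (cases "x \<in> inner_bdry N \<Omega> T")
    case True
    have "0 \<le> K" using T_row[OF x(1)] sum_nonneg[of "{..<N}" "T x"] T_nonneg by force
    have "(\<Sum>y<N. if y \<in> \<Omega> then 0 else T x y) \<le> (\<Sum>y<N. T x y)"
      by (intro sum_mono) (simp add: T_nonneg)
    then have "K / s * (\<Sum>y<N. if y \<in> \<Omega> then 0 else T x y) \<le> K / s * K"
      using T_row[OF x(1)] \<open>0 \<le> K\<close> \<open>0 < s\<close> by (intro mult_left_mono) auto
    then show ?thesis using True by (simp add: power2_eq_square)
  next
    case False
    then have "(\<Sum>y<N. if y \<in> \<Omega> then 0 else T x y) = 0"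
      using x unfolding inner_bdry_def by (intro sum.neutral) auto
    then show ?thesis using False by simp
  qed
  finally show ?thesis .
qed

lemma sum_bond_share_outside_le:
  fixes T :: "nat \<Rightarrow> nat \<Rightarrow> real" and K s :: real
  assumes T_nonneg: "\<And>x y. 0 \<le> T x y" and T_row: "\<And>x. x < N \<Longrightarrow> (\<Sum>y<N. T x y) \<le> K"
    and "0 < s" and x: "x < N" "x \<notin> \<Omega>"
  shows "(\<Sum>y<N. 2 * (if x \<in> \<Omega> \<and> y \<in> \<Omega> then 0 else T x y) * bond_share \<Omega> (K / s) x y) \<le> K + s"
proof -
  have "0 \<le> K" using T_row[OF x(1)] sum_nonneg[of "{..<N}" "T x"] T_nonneg by force
  have "(\<Sum>y<N. 2 * (if x \<in> \<Omega> \<and> y \<in> \<Omega> then 0 else T x y) * bond_share \<Omega> (K / s) x y)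
      \<le> (\<Sum>y<N. (1 + s / K) * T x y)"
  proof (rule sum_mono)
    fix y assume "y \<in> {..<N}"
    show "2 * (if x \<in> \<Omega> \<and> y \<in> \<Omega> then 0 else T x y) * bond_share \<Omega> (K / s) x y \<le> (1 + s / K) * T x y"
    proof (cases "T x y = 0")
      case False
      then have "0 < K"
        using row_bound_pos_if_bond[of T N K x y, OF T_nonneg T_row x(1)] \<open>y \<in> {..<N}\<close> by blast
      then show ?thesis
        using x(2) T_nonneg[of x y] \<open>0 < s\<close> unfolding bond_share_def by (auto simp: field_simps)
    qed simp
  qed
  also have "\<dots> \<le> (1 + s / K) * K"
    using T_row[OF x(1)] \<open>0 \<le> K\<close> \<open>0 < s\<close> by (simp add: sum_distrib_left[symmetric] mult_left_mono)
  also have "\<dots> \<le> K + s" using \<open>0 < s\<close> \<open>0 \<le> K\<close> by (cases "K = 0") (simp_all add: field_simps)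
  finally show ?thesis .
qed

lemma cross_terms_le:
  fixes T :: "nat \<Rightarrow> nat \<Rightarrow> real" and K s :: real and u :: "nat \<Rightarrow> complex"
  assumes T_nonneg: "\<And>x y. 0 \<le> T x y" and T_sym: "\<And>x y. T x y = T y x"
    and T_row: "\<And>x. x < N \<Longrightarrow> (\<Sum>y<N. T x y) \<le> K" and "0 < s"
  shows "(\<Sum>x<N. \<Sum>y<N. (if x \<in> \<Omega> \<and> y \<in> \<Omega> then 0 else T x y) * Re (cnj (u x) * u y))
    \<le> (\<Sum>x<N. ((if x \<in> \<Omega> then 0 else K + s)
                + (if x \<in> inner_bdry N \<Omega> T then K\<^sup>2 / s else 0)) * (cmod (u x))\<^sup>2)"
proof -
  define c where "c x y = (if x \<in> \<Omega> \<and> y \<in> \<Omega> then 0 else T x y)" for x y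
  define f where "f = bond_share \<Omega> (K / s)"
  define nu where "nu x = (cmod (u x))\<^sup>2" for x
  have pair: "c x y * Re (cnj (u x) * u y) \<le> c x y * (f x y * nu x + f y x * nu y)"
    if "x < N" "y < N" for x y
  proof (cases "c x y = 0")
    case False
    then have "\<not> (x \<in> \<Omega> \<and> y \<in> \<Omega>)" and "0 < K"
      using row_bound_pos_if_bond[of T N K x y, OF T_nonneg T_row that] unfolding c_def
      by (auto split: if_splits)
    then have "Re (cnj (u x) * u y) \<le> f x y * nu x + f y x * nu y"
      unfolding f_def nu_def using \<open>0 < s\<close> by (intro Re_cnj_mult_le_bond_share) auto
    then show ?thesis using T_nonneg unfolding c_def by (intro mult_left_mono) auto
  qed simp
  have weight: "(\<Sum>y<N. 2 * c x y * f x y)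
      \<le> (if x \<in> \<Omega> then 0 else K + s) + (if x \<in> inner_bdry N \<Omega> T then K\<^sup>2 / s else 0)"
    if "x < N" for x
    using sum_bond_share_inside_le[where T = T and N = N and K = K, OF T_nonneg T_row \<open>0 < s\<close> that]
      sum_bond_share_outside_le[where T = T and N = N and K = K, OF T_nonneg T_row \<open>0 < s\<close> that]
    unfolding c_def f_def by (cases "x \<in> \<Omega>") (auto simp: inner_bdry_def)
  have "(\<Sum>x<N. \<Sum>y<N. c x y * Re (cnj (u x) * u y))
      \<le> (\<Sum>x<N. \<Sum>y<N. c x y * (f x y * nu x + f y x * nu y))"
    using pair by (intro sum_mono) auto
  also have "\<dots> = 2 * (\<Sum>x<N. \<Sum>y<N. c x y * (f x y * nu x))"
    by (rule sum_sum_symmetrize) (simp add: c_def T_sym)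
  also have "\<dots> = (\<Sum>x<N. (\<Sum>y<N. 2 * c x y * f x y) * nu x)"
    by (simp add: sum_distrib_left sum_distrib_right mult_ac)
  also have "\<dots> \<le> (\<Sum>x<N. ((if x \<in> \<Omega> then 0 else K + s)
                + (if x \<in> inner_bdry N \<Omega> T then K\<^sup>2 / s else 0)) * nu x)"
    using weight by (intro sum_mono mult_right_mono) (auto simp: nu_def)
  finally show ?thesis unfolding c_def nu_def .
qed

lemma quad_form_proj_le:
  fixes H :: "complex mat" and a :: "nat \<Rightarrow> real" and T :: "nat \<Rightarrow> nat \<Rightarrow> real" and K s :: real
  assumes H: "H \<in> carrier_mat N N"
    and H_index: "\<And>x y. x < N \<Longrightarrow> y < N \<Longrightarrow> H $$ (x, y) = of_real ((if x = y then a x else 0) - T x y)"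
    and T_nonneg: "\<And>x y. 0 \<le> T x y" and T_sym: "\<And>x y. T x y = T y x"
    and T_row: "\<And>x. x < N \<Longrightarrow> (\<Sum>y<N. T x y) \<le> K" and "0 < s"
    and a_outside: "\<And>x. x < N \<Longrightarrow> x \<notin> \<Omega> \<Longrightarrow> K + s \<le> a x"
  shows "Re (quad_form N (proj N \<Omega> * H * proj N \<Omega>) u)
      - (\<Sum>x<N. (if x \<in> inner_bdry N \<Omega> T then K\<^sup>2 / s else 0) * (cmod (u x))\<^sup>2)
    \<le> Re (quad_form N H u)"
proof -
  have "(\<Sum>x<N. ((if x \<in> \<Omega> then 0 else K + s)
          + (if x \<in> inner_bdry N \<Omega> T then K\<^sup>2 / s else 0)) * (cmod (u x))\<^sup>2)
      \<le> (\<Sum>x<N. (if x \<in> \<Omega> then 0 else a x * (cmod (u x))\<^sup>2)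
          + (if x \<in> inner_bdry N \<Omega> T then K\<^sup>2 / s else 0) * (cmod (u x))\<^sup>2)"
  proof (rule sum_mono)
    fix x assume "x \<in> {..<N}"
    then have "(if x \<in> \<Omega> then 0 else K + s) * (cmod (u x))\<^sup>2 \<le> (if x \<in> \<Omega> then 0 else a x * (cmod (u x))\<^sup>2)"
      using a_outside[of x] by (auto intro: mult_right_mono)
    then show "((if x \<in> \<Omega> then 0 else K + s) + (if x \<in> inner_bdry N \<Omega> T then K\<^sup>2 / s else 0)) * (cmod (u x))\<^sup>2
        \<le> (if x \<in> \<Omega> then 0 else a x * (cmod (u x))\<^sup>2)
          + (if x \<in> inner_bdry N \<Omega> T then K\<^sup>2 / s else 0) * (cmod (u x))\<^sup>2"
      by (simp only: distrib_right)
  qed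
  then show ?thesis
    using Re_quad_form_sub_proj[OF H H_index, of u \<Omega>] cross_terms_le[OF T_nonneg T_sym T_row \<open>0 < s\<close>, of \<Omega> u]
    by (simp add: sum.distrib)
qed

theorem neg_trace_proj_localization:
  fixes H :: "complex mat" and a :: "nat \<Rightarrow> real" and T :: "nat \<Rightarrow> nat \<Rightarrow> real" and K s :: real
  assumes H: "H \<in> carrier_mat N N"
    and H_index: "\<And>x y. x < N \<Longrightarrow> y < N \<Longrightarrow> H $$ (x, y) = of_real ((if x = y then a x else 0) - T x y)"
    and T_nonneg: "\<And>x y. 0 \<le> T x y" and T_sym: "\<And>x y. T x y = T y x"
    and T_row: "\<And>x. x < N \<Longrightarrow> (\<Sum>y<N. T x y) \<le> K" and "0 < s"
    and a_outside: "\<And>x. x < N \<Longrightarrow> x \<notin> \<Omega> \<Longrightarrow> K + s \<le> a x"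
  shows "neg_trace (proj N \<Omega> * H * proj N \<Omega>) - K\<^sup>2 / s * real (card (inner_bdry N \<Omega> T))
    \<le> neg_trace H"
proof -
  define M where "M = proj N \<Omega> * H * proj N \<Omega>"
  define w where "w x = (if x \<in> inner_bdry N \<Omega> T then K\<^sup>2 / s else 0)" for x
  have "hermitian H" unfolding hermitian_iff_index[OF H] by (auto simp: H_index T_sym)
  have "proj N \<Omega> \<in> carrier_mat N N" unfolding proj_def by simp
  then have M: "M \<in> carrier_mat N N" unfolding M_def using H by (metis mult_carrier_mat)
  have "hermitian M" unfolding hermitian_iff_index[OF M]
  proof (intro allI impI)
    fix i j assume "i < N" "j < N"
    then show "M $$ (j, i) = cnj (M $$ (i, j))"
      using hermitian_index[OF H \<open>hermitian H\<close> \<open>i < N\<close> \<open>j < N\<close>]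
      by (simp add: M_def index_proj_mult_proj[OF H])
  qed
  have "(\<Sum>x<N. w x) = (\<Sum>x\<in>inner_bdry N \<Omega> T. w x)"
    by (rule sum.mono_neutral_right) (auto simp: w_def inner_bdry_def)
  then have "(\<Sum>x<N. w x) = K\<^sup>2 / s * real (card (inner_bdry N \<Omega> T))" by (simp add: w_def)
  moreover have "neg_trace M - (\<Sum>x<N. w x) \<le> neg_trace H"
    using quad_form_proj_le[OF assms] \<open>0 < s\<close>
    by (intro neg_trace_ge_of_quad_form_ge[OF H \<open>hermitian H\<close> M \<open>hermitian M\<close>])
      (auto simp: w_def M_def)
  ultimately show ?thesis unfolding M_def by simp
qed

section \<open>The discrete Schroedinger operator on the torus\<close>

lemma Kmu_add_mult_op_carrier:
  "Kmu L d \<mu> + complex_of_real U \<cdot>\<^sub>m mult_op (lat_size L d) r \<in> carrier_mat (lat_size L d) (lat_size L d)"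
  unfolding Kmu_def lap_def hop_def mult_op_def by auto

lemma index_Kmu_add_mult_op:
  assumes "x < lat_size L d" "y < lat_size L d"
  shows "(Kmu L d \<mu> + complex_of_real U \<cdot>\<^sub>m mult_op (lat_size L d) r) $$ (x, y)
    = complex_of_real ((if x = y then 2 * real d - \<mu> + U * r x else 0)
        - (if tdist L d x y = 1 then 1 else 0))"
  using assms unfolding Kmu_def lap_def hop_def mult_op_def by auto

lemma sum_adjacent_le: "(\<Sum>y<lat_size L d. if tdist L d x y = 1 then 1 else 0 :: real) \<le> 2 * real d"
proof -
  have "(\<Sum>y<lat_size L d. if tdist L d x y = 1 then 1 else 0 :: real)
      = real (card {y \<in> {..<lat_size L d}. tdist L d x y = 1})"
    by (simp add: sum.inter_filter[symmetric])
  also have "\<dots> \<le> 2 * real d" using card_neighbours_le[of L d x] by simp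
  finally show ?thesis .
qed

lemma inner_bdry_adjacent_subset:
  "inner_bdry (lat_size L d) \<Omega> (\<lambda>x y. if tdist L d x y = 1 then 1 else 0) \<subseteq> bdry L d \<Omega>"
  unfolding inner_bdry_def by (auto intro: in_bdryI split: if_splits)

lemma potential_outside_low_set:
  assumes "0 < U" "2 * \<mu> < U * \<delta>" "x < N" "x \<notin> low_set N \<gamma> \<delta>"
  shows "2 * real d + U * \<delta> / 2 \<le> 2 * real d - \<mu> + U * rho_tilde N \<gamma> \<delta> \<mu> U x"
proof -
  have "\<delta> \<le> rho_tilde N \<gamma> \<delta> \<mu> U x" using assms(3,4) unfolding rho_tilde_def low_set_def by auto
  then have "U * \<delta> \<le> U * rho_tilde N \<gamma> \<delta> \<mu> U x" using assms(1) by (simp add: mult_left_mono)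
  then show ?thesis using assms(2) by linarith
qed

theorem lemma3p2:
  fixes L d :: nat and \<mu> U \<delta> :: real and \<gamma> :: "complex mat"
  assumes "\<mu> > 0" and "U > 0" and "\<delta> > 2 * \<mu> / U"
    and "density_matrix (lat_size L d) \<gamma>"
  shows "neg_trace (Kmu L d \<mu> + complex_of_real U \<cdot>\<^sub>m mult_op (lat_size L d) (rho_tilde (lat_size L d) \<gamma> \<delta> \<mu> U))
      \<ge> neg_trace (proj (lat_size L d) (low_set (lat_size L d) \<gamma> \<delta>)
                    * (Kmu L d \<mu> + complex_of_real U \<cdot>\<^sub>m mult_op (lat_size L d) (rho_tilde (lat_size L d) \<gamma> \<delta> \<mu> U))
                    * proj (lat_size L d) (low_set (lat_size L d) \<gamma> \<delta>))
         - 8 * (real d)\<^sup>2 / (U * \<delta>) * real (card (bdry L d (low_set (lat_size L d) \<gamma> \<delta>)))"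
proof -
  define N where "N = lat_size L d"
  define \<Omega> where "\<Omega> = low_set N \<gamma> \<delta>"
  define T where "T x y = (if tdist L d x y = 1 then 1 else 0 :: real)" for x y
  have "2 * \<mu> < U * \<delta>" using assms(2,3) by (simp add: field_simps)
  then have "neg_trace (proj N \<Omega> * (Kmu L d \<mu> + complex_of_real U \<cdot>\<^sub>m mult_op N (rho_tilde N \<gamma> \<delta> \<mu> U)) * proj N \<Omega>)
      - (2 * real d)\<^sup>2 / (U * \<delta> / 2) * real (card (inner_bdry N \<Omega> T))
      \<le> neg_trace (Kmu L d \<mu> + complex_of_real U \<cdot>\<^sub>m mult_op N (rho_tilde N \<gamma> \<delta> \<mu> U))"
    using assms(1,2) potential_outside_low_set sum_adjacent_le[of L d, folded N_def T_def]
    unfolding \<Omega>_def N_def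
    by (intro neg_trace_proj_localization[OF Kmu_add_mult_op_carrier])
      (auto simp: index_Kmu_add_mult_op T_def tdist_commute)
  moreover have "card (inner_bdry N \<Omega> T) \<le> card (bdry L d \<Omega>)"
    using inner_bdry_adjacent_subset[of L d \<Omega>] unfolding N_def T_def
    by (intro card_mono) (auto simp: bdry_def \<Omega>_def low_set_def)
  moreover have "(2 * real d)\<^sup>2 / (U * \<delta> / 2) = 8 * (real d)\<^sup>2 / (U * \<delta>)"
    by (simp add: power2_eq_square field_simps)
  moreover have "0 \<le> 8 * (real d)\<^sup>2 / (U * \<delta>)" using \<open>2 * \<mu> < U * \<delta>\<close> assms(1) by simp
  ultimately show ?thesis unfolding N_def \<Omega>_def
    by (smt (verit) mult_left_mono of_nat_mono)
qed

end
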